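(* Let $q$ be a prime power and $n,k,\delta,\alpha$ positive integers with $k\le n$, $3\le\alpha\le\left[{k\atop 1}\right]_q$ and $\delta\ge(\alpha-1)(k-1)+1$. Then $$B_q(n,k,\delta;\alpha)\le(\alpha-1)\frac{\left[{n\atop 1}\right]_q}{\left[{k\atop 1}\right]_q+1}.$$
   Context: For a prime power $q$, $\mathcal{G}_q(n,k)$ denotes the set of all $k$-dimensional subspaces of $\mathbb{F}_q^n$, and the Gaussian binomial coefficient is $\left[{n\atop k}\right]_q=\prod_{i=0}^{k-1}\frac{q^n-q^i}{q^k-q^i}$; in particular $\left[{n\atop 1}\right]_q=\frac{q^n-1}{q-1}$. An $\alpha$-$(n,k,\delta)_q^c$ covering Grassmannian code is a subset $\mathcal{C}\subseteq\mathcal{G}_q(n,k)$ (no repeated codewords) such that every set of $\alpha$ distinct codewords of $\mathcal{C}$ spans a subspace of $\mathbb{F}_q^n$ of dimension at least $k+\delta$. $B_q(n,k,\delta;\alpha)$ denotes the maximum size of an $\alpha$-$(n,k,\delta)_q^c$ code. *)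

theory Defs
  imports "HOL-Analysis.Analysis"
begin

definition gauss_binom :: "nat \<Rightarrow> nat \<Rightarrow> nat \<Rightarrow> real" where
  "gauss_binom q n k = (\<Prod>i<k. (real q ^ n - real q ^ i) / (real q ^ k - real q ^ i))"

text \<open>The Grassmannian G_q(n,k): all k-dimensional subspaces of F^n, where F is the
  finite field 'a and n = CARD('n).\<close>
definition grassmannian :: "nat \<Rightarrow> ('a::field ^ 'n) set set" where
  "grassmannian k = {S. vec.subspace S \<and> vec.dim S = k}"

definition covering_code :: "nat \<Rightarrow> nat \<Rightarrow> nat \<Rightarrow> ('a::field ^ 'n) set set \<Rightarrow> bool" where
  "covering_code k \<delta> \<alpha> C \<longleftrightarrow>
     C \<subseteq> grassmannian k \<and>
     (\<forall>A \<subseteq> C. card A = \<alpha> \<longrightarrow> vec.dim (vec.span (\<Union>A)) \<ge> k + \<delta>)"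

definition B_max :: "('a::{field,finite}) itself \<Rightarrow> ('n::finite) itself \<Rightarrow> nat \<Rightarrow> nat \<Rightarrow> nat \<Rightarrow> nat" where
  "B_max _ _ k \<delta> \<alpha> =
     Max {card C | C :: ('a ^ 'n) set set. covering_code k \<delta> \<alpha> C}"

end

theory Submission
  imports Defs
begin

text \<open>Any \<open>\<alpha>\<close> codewords span at least \<open>k + \<delta> \<ge> \<alpha>k - \<alpha> + 2\<close> dimensions, whereas by
  Grassmann's formula \<open>\<alpha>\<close> codewords through a common nonzero vector span at most
  \<open>\<alpha>k - \<alpha> + 1\<close>; so every nonzero vector lies in at most \<open>\<alpha> - 1\<close> codewords. Call it
  saturated if it lies in exactly \<open>\<alpha> - 1\<close>. The same dimension count shows that two saturated
  vectors in a common codeword lie in the same \<open>\<alpha> - 1\<close> codewords, and (adding any further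
  codeword) that they are proportional; hence a codeword contains at most \<open>q - 1\<close> saturated
  vectors. Double counting incidences between nonzero vectors and codewords gives
  \<open>|C|(q^k - 1) \<le> (\<alpha> - 2)(q^n - 1) + s\<close> and \<open>(\<alpha> - 1) s \<le> |C|(q - 1)\<close> for the number \<open>s\<close>
  of saturated vectors, and eliminating \<open>s\<close> yields \<open>|C|(q^k + q - 2) \<le> (\<alpha> - 1)(q^n - 1)\<close>.\<close>

lemma card_span_independent:
  fixes B :: "('a::{field,finite}^'n) set"
  assumes ind: "vec.independent B"
  shows "card (vec.span B) = CARD('a) ^ card B"
proof -
  have fin: "finite B" using vec.finiteI_independent[OF ind] .
  let ?comb = "\<lambda>u. \<Sum>v\<in>B. u v *s v"
  have inj: "inj_on ?comb (B \<rightarrow>\<^sub>E UNIV)"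
  proof (rule inj_onI)
    fix u w assume u: "u \<in> B \<rightarrow>\<^sub>E UNIV" and w: "w \<in> B \<rightarrow>\<^sub>E UNIV" and eq: "?comb u = ?comb w"
    have diff: "(\<Sum>v\<in>B. (u v - w v) *s v) = 0"
      using eq by (simp add: vector_sub_rdistrib sum_subtractf)
    have indep: "\<forall>c. (\<Sum>v\<in>B. c v *s v) = 0 \<longrightarrow> (\<forall>v\<in>B. c v = 0)"
      using ind by (simp add: vec.independent_explicit)
    have "\<forall>v\<in>B. u v - w v = 0"
      using indep[THEN spec, of "\<lambda>v. u v - w v", THEN mp, OF diff] by simp
    then show "u = w" by (intro PiE_ext[OF u w]) simp
  qed
  have image: "?comb ` (B \<rightarrow>\<^sub>E UNIV) = vec.span B"
  proof
    show "?comb ` (B \<rightarrow>\<^sub>E UNIV) \<subseteq> vec.span B" using vec.span_finite[OF fin] by auto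
    show "vec.span B \<subseteq> ?comb ` (B \<rightarrow>\<^sub>E UNIV)"
    proof
      fix x assume "x \<in> vec.span B"
      then obtain u where x: "x = ?comb u" using vec.span_finite[OF fin] by auto
      have "restrict u B \<in> B \<rightarrow>\<^sub>E UNIV" by auto
      moreover have "?comb (restrict u B) = x" using x by (auto intro: sum.cong)
      ultimately show "x \<in> ?comb ` (B \<rightarrow>\<^sub>E UNIV)" by (rule rev_image_eqI[where f="?comb", OF _ sym])
    qed
  qed
  have "card (vec.span B) = card (B \<rightarrow>\<^sub>E (UNIV::'a set))"
    using card_image[OF inj] unfolding image .
  also have "\<dots> = CARD('a) ^ card B" unfolding card_PiE[OF fin] by simp
  finally show ?thesis .
qed

lemma card_subspace:
  fixes S :: "('a::{field,finite}^'n) set"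
  assumes "vec.subspace S"
  shows "card S = CARD('a) ^ vec.dim S"
proof -
  obtain B where B: "B \<subseteq> S" "vec.independent B" "S \<subseteq> vec.span B" "card B = vec.dim S"
    by (rule vec.basis_exists)
  have "vec.span B = S" using vec.span_minimal[OF B(1) assms] B(3) by (rule subset_antisym)
  then show ?thesis using card_span_independent[OF B(2)] B(4) by simp
qed

lemma card_field_ge_2: "2 \<le> CARD('a::{field,finite})"
proof -
  have "card {0::'a, 1} \<le> CARD('a)" by (rule card_mono) auto
  moreover have "card {0::'a, 1} = 2" by simp
  ultimately show ?thesis by linarith
qed

lemma dim_span_Un_le:
  fixes X W Z :: "('a::field^'n) set"
  assumes "vec.subspace X" "vec.subspace W" "Z \<subseteq> X \<inter> W"
  shows "vec.dim (vec.span (X \<union> W)) + vec.dim Z \<le> vec.dim X + vec.dim W"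
proof -
  have "vec.span X = X" "vec.span W = W"
    using assms(1,2) by (simp_all add: vec.span_eq_iff)
  then have "vec.span (X \<union> W) = {x + y |x y. x \<in> X \<and> y \<in> W}"
    using vec.span_Un[of X W] by (simp only:)
  moreover have "vec.dim Z \<le> vec.dim (X \<inter> W)" using vec.dim_subset assms(3) .
  ultimately show ?thesis using vec.dim_sums_Int[OF assms(1,2)] by simp
qed

lemma dim_span_Union_le:
  fixes A :: "('a::field^'n) set set" and Z :: "('a^'n) set"
  assumes "finite A" "A \<noteq> {}" "\<And>U. U \<in> A \<Longrightarrow> vec.subspace U" "\<And>U. U \<in> A \<Longrightarrow> Z \<subseteq> U"
  shows "vec.dim (vec.span (\<Union>A)) + (card A - 1) * vec.dim Z \<le> (\<Sum>U\<in>A. vec.dim U)"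
  using assms
proof (induction A rule: finite_ne_induct)
  case (singleton U)
  then show ?case by simp
next
  case (insert U F)
  let ?X = "vec.span (\<Union>F)"
  obtain U' where "U' \<in> F" using insert.hyps(2) by blast
  then have "Z \<subseteq> \<Union>F" using insert.prems(2) by blast
  then have "Z \<subseteq> ?X" using vec.span_superset by blast
  then have "vec.dim (vec.span (U \<union> ?X)) + vec.dim Z \<le> vec.dim U + vec.dim ?X"
    using insert.prems by (intro dim_span_Un_le) auto
  moreover have "vec.span (\<Union>(insert U F)) = vec.span (U \<union> ?X)"
    by (simp only: Union_insert vec.span_Un vec.span_span)
  moreover have "vec.dim ?X + (card F - 1) * vec.dim Z \<le> (\<Sum>U\<in>F. vec.dim U)"
    using insert.IH insert.prems by blast
  moreover have "card F * vec.dim Z = (card F - 1) * vec.dim Z + vec.dim Z"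
    using insert.hyps(1,2) by (cases "card F") simp_all
  ultimately show ?case using insert.hyps by simp
qed

lemma sum_card_incidences:
  fixes C :: "'b set set"
  assumes "finite C" "finite T"
  shows "(\<Sum>v\<in>T. card {U\<in>C. v \<in> U}) = (\<Sum>U\<in>C. card (T \<inter> U))"
proof -
  have "(\<Sum>v\<in>T. card {U\<in>C. v \<in> U}) = (\<Sum>v\<in>T. \<Sum>U\<in>C. of_bool (v \<in> U))"
    using assms(1) by (simp add: Collect_conj_eq)
  also have "\<dots> = (\<Sum>U\<in>C. \<Sum>v\<in>T. of_bool (v \<in> U))"
    by (rule sum.swap)
  also have "\<dots> = (\<Sum>U\<in>C. card (T \<inter> U))"
    using assms(2) by simp
  finally show ?thesis .
qed

lemma grassmannian_full: "grassmannian CARD('n) = {UNIV :: ('a::field^'n::finite) set}"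
proof (intro equalityI subsetI)
  fix U :: "('a^'n) set" assume U: "U \<in> grassmannian CARD('n)"
  then have "vec.span U = vec.span UNIV"
    by (intro vec.dim_eq_span) (auto simp: grassmannian_def card_cart_basis)
  moreover have "vec.span U = U" using U by (simp add: grassmannian_def vec.span_eq_iff)
  ultimately show "U \<in> {UNIV}" by simp
qed (simp add: grassmannian_def card_cart_basis)

locale covering_code_large_delta =
  fixes C :: "('a::{field,finite} ^ 'n::finite) set set" and k \<delta> \<alpha> :: nat
  assumes covering: "covering_code k \<delta> \<alpha> C"
    and alpha_ge_3: "3 \<le> \<alpha>"
    and delta_ge: "(\<alpha> - 1) * (k - 1) + 1 \<le> \<delta>"
begin

lemma finite_code: "finite C"
  by (rule finite_subset[OF subset_UNIV]) simp

lemma subspace_codeword: "U \<in> C \<Longrightarrow> vec.subspace U"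
  and dim_codeword: "U \<in> C \<Longrightarrow> vec.dim U = k"
  using covering by (auto simp: covering_code_def grassmannian_def)

lemma dim_span_codewords_ge:
  assumes "A \<subseteq> C" "card A = \<alpha>"
  shows "\<alpha> * k + 2 \<le> vec.dim (vec.span (\<Union>A)) + \<alpha>"
proof -
  have "\<alpha> * k + 2 \<le> k + \<delta> + \<alpha>"
  proof (cases k)
    case (Suc m)
    have "\<alpha> * Suc m = (\<alpha> - 1) * m + m + \<alpha>" using alpha_ge_3 by (cases \<alpha>) auto
    then show ?thesis using Suc delta_ge by simp
  qed (use delta_ge alpha_ge_3 in simp)
  moreover have "k + \<delta> \<le> vec.dim (vec.span (\<Union>A))"
    using covering assms by (auto simp: covering_code_def)
  ultimately show ?thesis by linarith
qed

definition multiplicity :: "'a ^ 'n \<Rightarrow> nat" where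
  "multiplicity v = card {U\<in>C. v \<in> U}"

lemma multiplicity_le:
  assumes "v \<noteq> 0"
  shows "multiplicity v \<le> \<alpha> - 1"
proof (rule ccontr)
  assume "\<not> ?thesis"
  then have "\<alpha> \<le> card {U\<in>C. v \<in> U}" unfolding multiplicity_def by simp
  then obtain A where A: "A \<subseteq> {U\<in>C. v \<in> U}" "card A = \<alpha>" "finite A"
    by (rule obtain_subset_with_card_n)
  have "vec.dim (vec.span (\<Union>A)) + (card A - 1) * vec.dim (vec.span {v}) \<le> (\<Sum>U\<in>A. vec.dim U)"
  proof (rule dim_span_Union_le)
    show "A \<noteq> {}" using A(2) alpha_ge_3 by auto
    fix U assume "U \<in> A"
    then show "vec.subspace U" "vec.span {v} \<subseteq> U"
      using A(1) subspace_codeword vec.span_minimal[of "{v}" U] by auto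
  qed (fact A(3))
  moreover have "(\<Sum>U\<in>A. vec.dim U) = (\<Sum>U\<in>A. k)"
    using A(1) dim_codeword by (intro sum.cong) auto
  moreover have "vec.dim (vec.span {v}) = 1" using assms by simp
  ultimately have "vec.dim (vec.span (\<Union>A)) + (\<alpha> - 1) \<le> \<alpha> * k"
    using A(2) by simp
  moreover have "\<alpha> * k + 2 \<le> vec.dim (vec.span (\<Union>A)) + \<alpha>"
    using A by (intro dim_span_codewords_ge) auto
  moreover have "\<alpha> - 1 + 1 = \<alpha>" using alpha_ge_3 by simp
  ultimately show False by linarith
qed

text \<open>The covering condition for the \<open>\<alpha>\<close> codewords \<open>S \<union> {W}\<close>, combined with Grassmann's
  formula for \<open>span (\<Union>S)\<close> and \<open>W\<close>.\<close>
lemma dim_common_subspace_le: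
  assumes "S \<subseteq> C" "card S = \<alpha> - 1" "W \<in> C" "W \<notin> S"
    and "\<And>U. U \<in> S \<Longrightarrow> Z \<subseteq> U" and "Y \<subseteq> vec.span (\<Union>S)" "Y \<subseteq> W"
  shows "(\<alpha> - 2) * vec.dim Z + vec.dim Y \<le> \<alpha> - 2"
proof -
  let ?X = "vec.span (\<Union>S)"
  have fin: "finite S" using assms(1) finite_code finite_subset by blast
  have "vec.dim ?X + (card S - 1) * vec.dim Z \<le> (\<Sum>U\<in>S. vec.dim U)"
  proof (rule dim_span_Union_le[OF fin])
    show "S \<noteq> {}" using assms(2) alpha_ge_3 by auto
  qed (use assms(1,5) subspace_codeword in auto)
  moreover have "(\<Sum>U\<in>S. vec.dim U) = (\<Sum>U\<in>S. k)"
    using assms(1) dim_codeword by (intro sum.cong) auto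
  ultimately have X: "vec.dim ?X + (\<alpha> - 2) * vec.dim Z \<le> (\<alpha> - 1) * k"
    using assms(2) by (simp add: numeral_2_eq_2)
  have "vec.span (\<Union>(insert W S)) = vec.span (W \<union> ?X)"
    by (simp only: Union_insert vec.span_Un vec.span_span)
  moreover have "\<alpha> * k + 2 \<le> vec.dim (vec.span (\<Union>(insert W S))) + \<alpha>"
    using assms(1-4) fin alpha_ge_3 by (intro dim_span_codewords_ge) auto
  ultimately have WX: "\<alpha> * k + 2 \<le> vec.dim (vec.span (W \<union> ?X)) + \<alpha>" by simp
  have "vec.dim (vec.span (W \<union> ?X)) + vec.dim Y \<le> vec.dim W + vec.dim ?X"
    by (rule dim_span_Un_le) (use assms(3,6,7) subspace_codeword vec.subspace_span in auto)
  moreover have "\<alpha> * k = (\<alpha> - 1) * k + k" "\<alpha> - 2 + 2 = \<alpha>"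
    using alpha_ge_3 by (cases \<alpha>; simp)+
  ultimately show ?thesis using X WX dim_codeword[OF assms(3)] by linarith
qed

definition saturated :: "('a ^ 'n) set" where
  "saturated = {v. v \<noteq> 0 \<and> multiplicity v = \<alpha> - 1}"

lemma saturated_codewords_eq:
  assumes "v \<in> saturated" "w \<in> saturated" "U \<in> C" "v \<in> U" "w \<in> U"
  shows "{U\<in>C. w \<in> U} = {U\<in>C. v \<in> U}"
proof (rule ccontr)
  let ?Sv = "{U\<in>C. v \<in> U}" and ?Sw = "{U\<in>C. w \<in> U}"
  assume ne: "?Sw \<noteq> ?Sv"
  have card_eq: "card ?Sv = \<alpha> - 1" "card ?Sw = \<alpha> - 1"
    using assms(1,2) by (simp_all add: saturated_def multiplicity_def)
  have "finite ?Sv" using finite_code by simp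
  then have "\<not> ?Sw \<subseteq> ?Sv"
    using card_subset_eq[of ?Sv ?Sw] card_eq ne by argo
  then obtain W where W: "W \<in> C" "w \<in> W" "W \<notin> ?Sv" by blast
  have "(\<alpha> - 2) * vec.dim (vec.span {v}) + vec.dim (vec.span {w}) \<le> \<alpha> - 2"
  proof (rule dim_common_subspace_le[of ?Sv W])
    show "vec.span {w} \<subseteq> vec.span (\<Union>?Sv)"
      using assms(3-5) by (intro vec.span_mono) auto
    show "vec.span {w} \<subseteq> W"
      using W subspace_codeword by (intro vec.span_minimal) auto
    show "vec.span {v} \<subseteq> U'" if "U' \<in> ?Sv" for U'
      using that subspace_codeword by (intro vec.span_minimal) auto
  qed (use W card_eq in auto)
  then show False using assms(1,2) by (simp add: saturated_def)
qed

lemma saturated_collinear: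
  assumes "\<alpha> \<le> card C" "v \<in> saturated" "{U\<in>C. w \<in> U} = {U\<in>C. v \<in> U}"
  shows "w \<in> vec.span {v}"
proof (rule ccontr)
  let ?Sv = "{U\<in>C. v \<in> U}"
  assume w: "w \<notin> vec.span {v}"
  have card_Sv: "card ?Sv = \<alpha> - 1"
    using assms(2) by (simp add: saturated_def multiplicity_def)
  have "\<not> C \<subseteq> ?Sv"
  proof
    assume "C \<subseteq> ?Sv"
    then have "card C \<le> card ?Sv" using finite_code by (intro card_mono) simp_all
    then show False using card_Sv assms(1) alpha_ge_3 by linarith
  qed
  then obtain W where W: "W \<in> C" "W \<notin> ?Sv" by blast
  have "(\<alpha> - 2) * vec.dim (vec.span {w, v}) + vec.dim ({} :: ('a ^ 'n) set) \<le> \<alpha> - 2"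
  proof (rule dim_common_subspace_le[of ?Sv W])
    show "vec.span {w, v} \<subseteq> U'" if "U' \<in> ?Sv" for U'
      using that assms(3) subspace_codeword by (intro vec.span_minimal) auto
  qed (use W card_Sv in auto)
  moreover have "vec.dim (vec.span {w, v}) = 2"
  proof -
    have "v \<noteq> 0" using assms(2) by (simp add: saturated_def)
    then have "vec.independent {w, v}" using w by (auto simp: vec.independent_insert vec.span_base)
    then have "vec.dim (vec.span {w, v}) = card {w, v}" by (rule vec.dim_span_eq_card_independent)
    moreover have "w \<noteq> v" using w vec.span_base[of v "{v}"] by auto
    ultimately show ?thesis by (simp del: vec.dim_span)
  qed
  ultimately show False using alpha_ge_3 by simp
qed

lemma card_saturated_Int_codeword_le:
  assumes "\<alpha> \<le> card C" "U \<in> C"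
  shows "card (saturated \<inter> U) \<le> CARD('a) - 1"
proof (cases "saturated \<inter> U = {}")
  case False
  then obtain v where v: "v \<in> saturated" "v \<in> U" by blast
  have "saturated \<inter> U \<subseteq> vec.span {v} - {0}"
    using saturated_collinear[OF assms(1) v(1)] saturated_codewords_eq[OF v(1) _ assms(2) v(2)]
    by (auto simp: saturated_def)
  moreover have "card (vec.span {v} - {0}) = CARD('a) - 1"
  proof -
    have "v \<noteq> 0" using v by (simp add: saturated_def)
    then have "card (vec.span {v}) = CARD('a)"
      using card_span_independent[of "{v}"] by (simp add: vec.independent_insert)
    then show ?thesis by (simp add: vec.span_zero)
  qed
  ultimately show ?thesis using card_mono[of "vec.span {v} - {0}" "saturated \<inter> U"] by simp
qed simp

lemma card_saturated_le:
  assumes "\<alpha> \<le> card C"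
  shows "(\<alpha> - 1) * card saturated \<le> card C * (CARD('a) - 1)"
proof -
  have "(\<alpha> - 1) * card saturated = (\<Sum>v\<in>saturated. multiplicity v)"
    by (simp add: saturated_def)
  also have "\<dots> = (\<Sum>U\<in>C. card (saturated \<inter> U))"
    unfolding multiplicity_def by (rule sum_card_incidences[OF finite_code]) simp
  also have "\<dots> \<le> of_nat (card C) * (CARD('a) - 1)"
    using card_saturated_Int_codeword_le[OF assms] by (rule sum_bounded_above)
  finally show ?thesis by simp
qed

lemma sum_multiplicity:
  "(\<Sum>v\<in>-{0}. multiplicity v) = card C * (CARD('a) ^ k - 1)"
proof -
  have "(\<Sum>v\<in>-{0}. multiplicity v) = (\<Sum>U\<in>C. card (-{0} \<inter> U))"
    unfolding multiplicity_def by (rule sum_card_incidences[OF finite_code]) simp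
  also have "\<dots> = (\<Sum>U\<in>C. CARD('a) ^ k - 1)"
  proof (rule sum.cong)
    fix U assume U: "U \<in> C"
    have "0 \<in> U" "card U = CARD('a) ^ k"
      using card_subspace[OF subspace_codeword[OF U]] vec.subspace_0[OF subspace_codeword[OF U]]
        dim_codeword[OF U] by simp_all
    moreover have "-{0} \<inter> U = U - {0}" by auto
    ultimately show "card (-{0} \<inter> U) = CARD('a) ^ k - 1" by simp
  qed simp
  finally show ?thesis by simp
qed

lemma sum_multiplicity_le:
  "(\<Sum>v\<in>-{0}. multiplicity v) \<le> (\<alpha> - 2) * (CARD('a) ^ CARD('n) - 1) + card saturated"
proof -
  have "(\<Sum>v\<in>-{0}. multiplicity v) \<le> (\<Sum>v\<in>-{0}. (\<alpha> - 2) + (if v \<in> saturated then 1 else 0))"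
  proof (rule sum_mono)
    fix v :: "'a ^ 'n" assume "v \<in> -{0}"
    then show "multiplicity v \<le> (\<alpha> - 2) + (if v \<in> saturated then 1 else 0)"
      using multiplicity_le[of v] alpha_ge_3 by (auto simp: saturated_def)
  qed
  also have "\<dots> = (\<alpha> - 2) * card (-{0} :: ('a ^ 'n) set) + card saturated"
  proof -
    have "-{0} \<inter> saturated = saturated" by (auto simp: saturated_def)
    then show ?thesis by (simp add: sum.distrib sum.If_cases)
  qed
  also have "card (-{0} :: ('a ^ 'n) set) = CARD('a) ^ CARD('n) - 1"
    by (simp add: Compl_eq_Diff_UNIV card_Diff_singleton)
  finally show ?thesis .
qed

lemma card_code_le_if_card_ge:
  assumes "\<alpha> \<le> card C"
    and field: "(real \<alpha> - 1) * (real CARD('a) - 1) \<le> real CARD('a) ^ k - 1"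
  shows "real (card C) * (real CARD('a) ^ k + real CARD('a) - 2)
           \<le> (real \<alpha> - 1) * (real CARD('a) ^ CARD('n) - 1)"
proof -
  define c Q N s where "c = real (card C)" and "Q = real CARD('a)"
    and "N = real CARD('a) ^ CARD('n) - 1" and "s = real (card saturated)"
  have pos: "1 \<le> CARD('a) ^ k" "1 \<le> CARD('a) ^ CARD('n)" "1 \<le> CARD('a)" "2 \<le> \<alpha>"
    using card_field_ge_2[where 'a='a] alpha_ge_3 by simp_all
  have "card C * (CARD('a) ^ k - 1) \<le> (\<alpha> - 2) * (CARD('a) ^ CARD('n) - 1) + card saturated"
    using sum_multiplicity sum_multiplicity_le by simp
  then have "real (card C * (CARD('a) ^ k - 1))
               \<le> real ((\<alpha> - 2) * (CARD('a) ^ CARD('n) - 1) + card saturated)"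
    by (simp only: of_nat_le_iff)
  then have count: "c * (Q ^ k - 1) \<le> (real \<alpha> - 2) * N + s"
    using pos by (simp add: c_def Q_def N_def s_def of_nat_diff)
  have "real ((\<alpha> - 1) * card saturated) \<le> real (card C * (CARD('a) - 1))"
    using card_saturated_le[OF assms(1)] by (simp only: of_nat_le_iff)
  then have sat: "(real \<alpha> - 1) * s \<le> c * (Q - 1)"
    using pos by (simp add: c_def Q_def N_def s_def of_nat_diff)
  have c: "0 \<le> c" by (simp add: c_def)
  have "(real \<alpha> - 1) * (c * (Q ^ k - 1)) \<le> (real \<alpha> - 1) * ((real \<alpha> - 2) * N + s)"
    using count alpha_ge_3 by (intro mult_left_mono) auto
  moreover have "c * ((real \<alpha> - 1) * (Q - 1)) \<le> c * (Q ^ k - 1)"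
    using field c by (intro mult_left_mono) (simp_all add: Q_def)
  moreover have "(real \<alpha> - 2) * (c * (Q ^ k + Q - 2))
      = (real \<alpha> - 1) * (c * (Q ^ k - 1)) - c * (Q - 1)
        - (c * (Q ^ k - 1) - c * ((real \<alpha> - 1) * (Q - 1)))"
    by (simp add: algebra_simps)
  moreover have "(real \<alpha> - 1) * ((real \<alpha> - 2) * N + s)
      = (real \<alpha> - 2) * ((real \<alpha> - 1) * N) + (real \<alpha> - 1) * s"
    by (simp add: algebra_simps)
  ultimately have "(real \<alpha> - 2) * (c * (Q ^ k + Q - 2)) \<le> (real \<alpha> - 2) * ((real \<alpha> - 1) * N)"
    using sat by linarith
  then show ?thesis
    using alpha_ge_3 by (simp add: c_def Q_def N_def s_def)
qed

lemma card_code_le: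
  assumes "k \<le> CARD('n)"
    and field: "(real \<alpha> - 1) * (real CARD('a) - 1) \<le> real CARD('a) ^ k - 1"
  shows "real (card C) * (real CARD('a) ^ k + real CARD('a) - 2)
           \<le> (real \<alpha> - 1) * (real CARD('a) ^ CARD('n) - 1)"
proof (cases "\<alpha> \<le> card C")
  case True
  then show ?thesis using field by (rule card_code_le_if_card_ge)
next
  case False
  define Q where "Q = real CARD('a)"
  have Q: "2 \<le> Q" using card_field_ge_2[where 'a='a] by (simp add: Q_def)
  have lhs: "0 \<le> Q ^ k + Q - 2" using Q one_le_power[of Q k] by linarith
  consider "k < CARD('n)" | "k = CARD('n)" using assms(1) by linarith
  then show ?thesis
  proof cases
    case 1
    have "Q * Q ^ k \<le> Q ^ CARD('n)"
      using 1 Q power_increasing[of "Suc k" "CARD('n)" Q] by simp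
    moreover have "0 \<le> (Q - 1) * (Q ^ k - 1)" using Q one_le_power[of Q k] by simp
    ultimately have "Q ^ k + Q - 2 \<le> Q ^ CARD('n) - 1" by (simp add: algebra_simps)
    moreover have "real (card C) \<le> real \<alpha> - 1" using False by simp
    ultimately show ?thesis
      using lhs alpha_ge_3 unfolding Q_def[symmetric] by (intro mult_mono) auto
  next
    case 2
    have "C \<subseteq> grassmannian CARD('n)"
      using covering 2 by (simp add: covering_code_def)
    then have "C \<subseteq> {UNIV}" by (simp only: grassmannian_full)
    then have "real (card C) \<le> 1" using card_mono[of "{UNIV}" C] by simp
    then have "real (card C) * (Q ^ k + Q - 2) \<le> 1 * (Q ^ k + Q - 2)"
      using lhs by (rule mult_right_mono)
    also have "\<dots> \<le> 2 * (Q ^ CARD('n) - 1)"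
      using 2 Q power_increasing[of 1 "CARD('n)" Q] by simp
    also have "\<dots> \<le> (real \<alpha> - 1) * (Q ^ CARD('n) - 1)"
      using alpha_ge_3 Q one_le_power[of Q "CARD('n)"] by (intro mult_right_mono) auto
    finally show ?thesis unfolding Q_def .
  qed
qed

end

lemma B_max_attained:
  assumes "0 < \<alpha>"
  obtains C :: "('a::{field,finite} ^ 'n::finite) set set"
  where "covering_code k \<delta> \<alpha> C" "B_max TYPE('a) TYPE('n) k \<delta> \<alpha> = card C"
proof -
  let ?S = "{card C | C :: ('a ^ 'n) set set. covering_code k \<delta> \<alpha> C}"
  have "finite ?S"
    by (rule finite_subset[of _ "card ` UNIV"]) auto
  moreover have "covering_code k \<delta> \<alpha> ({} :: ('a ^ 'n) set set)"
    using assms by (auto simp: covering_code_def)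
  then have "?S \<noteq> {}" by blast
  ultimately have "B_max TYPE('a) TYPE('n) k \<delta> \<alpha> \<in> ?S"
    unfolding B_max_def by (rule Max_in)
  then show ?thesis using that by blast
qed

lemma gauss_binom_1: "gauss_binom q n 1 = (real q ^ n - 1) / (real q - 1)"
  by (simp add: gauss_binom_def)

theorem mainTheorem5:
  fixes q n k \<delta> \<alpha> :: nat
  assumes "CARD('a::{field,finite}) = q"
    and "CARD('n::finite) = n"
    and "0 < k" and "0 < \<delta>" and "0 < \<alpha>" and "k \<le> n"
    and "3 \<le> \<alpha>" and "real \<alpha> \<le> gauss_binom q k 1"
    and "\<delta> \<ge> (\<alpha> - 1) * (k - 1) + 1"
  shows "real (B_max TYPE('a) TYPE('n) k \<delta> \<alpha>)
           \<le> (real \<alpha> - 1) * gauss_binom q n 1 / (gauss_binom q k 1 + 1)"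
proof -
  have q: "2 \<le> real q" using card_field_ge_2[where 'a='a] assms(1) by simp
  obtain C :: "('a ^ 'n) set set"
    where C: "covering_code k \<delta> \<alpha> C" and B: "B_max TYPE('a) TYPE('n) k \<delta> \<alpha> = card C"
    using B_max_attained assms(5) by blast
  interpret covering_code_large_delta C k \<delta> \<alpha>
    using C assms(7,9) by unfold_locales
  have "real \<alpha> * (real q - 1) \<le> real q ^ k - 1"
    using assms(8) q unfolding gauss_binom_1 by (simp add: le_divide_eq)
  moreover have "(real \<alpha> - 1) * (real q - 1) = real \<alpha> * (real q - 1) - (real q - 1)"
    by (simp add: algebra_simps)
  ultimately have "(real \<alpha> - 1) * (real CARD('a) - 1) \<le> real CARD('a) ^ k - 1"
    using q assms(1) by simp
  then have "real (card C) * (real q ^ k + real q - 2) \<le> (real \<alpha> - 1) * (real q ^ n - 1)"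
    using card_code_le assms(1,2,6) by simp
  moreover have "0 < real q ^ k + real q - 2" using q one_le_power[of "real q" k] by linarith
  ultimately have "real (card C) \<le> (real \<alpha> - 1) * (real q ^ n - 1) / (real q ^ k + real q - 2)"
    by (simp add: pos_le_divide_eq)
  also have "\<dots> = (real \<alpha> - 1) * ((real q ^ n - 1) / (real q - 1))
                    / ((real q ^ k + real q - 2) / (real q - 1))"
    using q by simp
  also have "\<dots> = (real \<alpha> - 1) * gauss_binom q n 1 / (gauss_binom q k 1 + 1)"
    using q unfolding gauss_binom_1 by (simp add: field_simps)
  finally show ?thesis using B by simp
qed

end
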